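(* Let $f:\mathbb{R}^n\to\mathbb{R}$ and $a:\mathbb{R}^n\to\mathbb{R}^m$ be twice differentiable on $\mathbb{R}^n$, let $\beta_1\in(0,1)$, $\beta_2\in(0,1)$, and $w\in\mathbb{R}^m$ with $w\ge0$. For any constants $C,\mu>0$ the set $\mathbb{Q}_{\mu,C}$ is compact.
   Context: $e$ denotes the all-ones vector, $S=\mathrm{diag}(s)$. For $\mu>0$: $\psi_\mu(x)=f(x)-\mu\sum_{i=1}^m(\beta_1a_i(x)+\log(\mu w_i-a_i(x)))$ (defined when $a(x)<\mu w$), and $\phi_\mu(x,s,y)=\psi_\mu(x)+\|Sy-\mu e\|_\infty^3/\mu^2$. The set $\mathbb{Q}_{\mu,C}$ consists of all $(x,y,s)\in\mathbb{R}^n\times\mathbb{R}^m_{++}\times\mathbb{R}^m_{++}$ such that $s_iy_i/\mu\in[\beta_2,1/\beta_2]$ for all $i$, $a(x)+s=\mu w$, $\phi_\mu(x,s,y)\le C$, and $\|x\|\le C$ (Euclidean norm). *)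

theory Defs
  imports "HOL-Analysis.Analysis"
begin

definition twice_differentiable ::
  "('a::real_normed_vector \<Rightarrow> 'b::real_normed_vector) \<Rightarrow> bool" where
  "twice_differentiable g \<longleftrightarrow>
     (\<exists>Dg :: 'a \<Rightarrow> ('a \<Rightarrow>\<^sub>L 'b).
        (\<forall>x. (g has_derivative blinfun_apply (Dg x)) (at x)) \<and>
        (\<forall>x. Dg differentiable (at x)))"

definition psi ::
  "(real^'n \<Rightarrow> real) \<Rightarrow> (real^'n \<Rightarrow> real^'m::finite) \<Rightarrow> real^'m \<Rightarrow> real \<Rightarrow> real
     \<Rightarrow> real^'n \<Rightarrow> real" where
  "psi f a w beta1 mu x =
     f x - mu * (\<Sum>i\<in>UNIV. beta1 * a x $ i + ln (mu * w $ i - a x $ i))"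

definition phi ::
  "(real^'n \<Rightarrow> real) \<Rightarrow> (real^'n \<Rightarrow> real^'m::finite) \<Rightarrow> real^'m \<Rightarrow> real \<Rightarrow> real
     \<Rightarrow> real^'n \<Rightarrow> real^'m \<Rightarrow> real^'m \<Rightarrow> real" where
  "phi f a w beta1 mu x s y =
     psi f a w beta1 mu x + (MAX i\<in>UNIV. \<bar>s $ i * y $ i - mu\<bar>) ^ 3 / mu ^ 2"

definition Qset ::
  "(real^'n \<Rightarrow> real) \<Rightarrow> (real^'n \<Rightarrow> real^'m::finite) \<Rightarrow> real^'m \<Rightarrow> real \<Rightarrow> real
     \<Rightarrow> real \<Rightarrow> real \<Rightarrow> ((real^'n) \<times> (real^'m) \<times> (real^'m)) set" where
  "Qset f a w beta1 beta2 mu C =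
     {(x, y, s). (\<forall>i. y $ i > 0) \<and> (\<forall>i. s $ i > 0) \<and>
        (\<forall>i. beta2 \<le> s $ i * y $ i / mu \<and> s $ i * y $ i / mu \<le> 1 / beta2) \<and>
        a x + s = mu *\<^sub>R w \<and>
        phi f a w beta1 mu x s y \<le> C \<and>
        norm x \<le> C}"

end

theory Submission
  imports Defs
begin

text \<open>
  On the ball \<open>norm x \<le> C\<close> both f and a are bounded, so the
  slack \<open>s = mu w - a x\<close> is bounded above by some M. The condition \<open>phi \<le> C\<close> bounds
  \<open>f x - mu \<Sum> ln s\<^sub>i\<close> from above, hence \<open>\<Sum> ln s\<^sub>i\<close> from below; since every summand is at
  most \<open>ln M\<close>, each \<open>s\<^sub>i\<close> stays above some \<open>\<delta> > 0\<close>. The centrality condition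
  \<open>beta2 \<le> s\<^sub>i y\<^sub>i / mu \<le> 1 / beta2\<close> then confines y to a box. On that box the barrier
  \<open>ln (mu w\<^sub>i - a\<^sub>i x) = ln s\<^sub>i\<close> is continuous, so Q is the intersection of a sublevel set of a
  continuous function on a compact set with closed constraints, hence compact.
\<close>

lemma twice_differentiable_imp_continuous_on:
  assumes "twice_differentiable g"
  shows "continuous_on S g"
proof -
  from assms obtain Dg where "\<forall>x. (g has_derivative blinfun_apply (Dg x)) (at x)"
    unfolding twice_differentiable_def by blast
  then show ?thesis
    using has_derivative_continuous continuous_at_imp_continuous_on by blast
qed

lemma continuous_on_Max:
  fixes g :: "'i \<Rightarrow> 'a::topological_space \<Rightarrow> 'b::linorder_topology"
  assumes "finite I" "I \<noteq> {}" "\<And>i. i \<in> I \<Longrightarrow> continuous_on S (g i)"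
  shows "continuous_on S (\<lambda>p. MAX i\<in>I. g i p)"
  using assms
proof (induction I rule: finite_ne_induct)
  case (singleton i)
  then show ?case by simp
next
  case (insert i I)
  then show ?case by (auto intro!: continuous_on_max)
qed

lemma lower_bound_from_sum_ln:
  fixes s :: "'i \<Rightarrow> real"
  assumes "finite I" "j \<in> I" "\<And>i. i \<in> I \<Longrightarrow> 0 < s i" "\<And>i. i \<in> I \<Longrightarrow> s i \<le> M"
    and "1 \<le> M" "L \<le> (\<Sum>i\<in>I. ln (s i))"
  shows "exp (L - real (card I) * ln M) \<le> s j"
proof -
  have "(\<Sum>i\<in>I. ln (s i)) = ln (s j) + (\<Sum>i\<in>I - {j}. ln (s i))"
    using assms(1,2) by (simp add: sum.remove)
  also have "(\<Sum>i\<in>I - {j}. ln (s i)) \<le> real (card (I - {j})) * ln M"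
    using assms(3,4) by (intro sum_bounded_above) (auto intro: ln_mono)
  also have "\<dots> \<le> real (card I) * ln M"
    using assms(1,5) by (intro mult_right_mono) (auto intro: card_mono)
  finally have "L - real (card I) * ln M \<le> ln (s j)"
    using assms(6) by linarith
  then show ?thesis
    using assms(2,3) by (metis exp_le_cancel_iff exp_ln)
qed

lemma psi_le_phi: "psi f a w beta1 mu x \<le> phi f a w beta1 mu x s y"
proof -
  have "\<bar>s $ i * y $ i - mu\<bar> \<le> (MAX i\<in>UNIV. \<bar>s $ i * y $ i - mu\<bar>)" for i
    by (rule Max_ge) auto
  then have "0 \<le> (MAX i\<in>UNIV. \<bar>s $ i * y $ i - mu\<bar>)"
    by (meson abs_ge_zero order_trans)
  then show ?thesis
    unfolding phi_def by simp
qed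

lemma psi_eq_slack:
  assumes "a x + s = mu *\<^sub>R w"
  shows "psi f a w beta1 mu x = f x - mu * (beta1 * (\<Sum>i\<in>UNIV. a x $ i) + (\<Sum>i\<in>UNIV. ln (s $ i)))"
proof -
  have "mu * w $ i - a x $ i = s $ i" for i
    using arg_cong[OF assms, of "\<lambda>v. v $ i"] by simp
  then show ?thesis
    unfolding psi_def by (simp add: sum.distrib sum_distrib_left)
qed

lemma continuous_on_phi:
  fixes f :: "real^'n \<Rightarrow> real" and a :: "real^'n \<Rightarrow> real^'m::finite"
  assumes "continuous_on UNIV f" "continuous_on UNIV a" "mu \<noteq> 0"
    and "\<And>p i. p \<in> P \<Longrightarrow> a (fst p) $ i < mu * w $ i"
  shows "continuous_on P (\<lambda>p. phi f a w beta1 mu (fst p) (snd (snd p)) (fst (snd p)))"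
  \<comment> \<open>points of \<open>Qset\<close> are triples \<open>(x, y, s)\<close>, whereas \<open>phi\<close> takes \<open>s\<close> before \<open>y\<close>\<close>
proof -
  have f: "continuous_on P (\<lambda>p. f (fst p))"
    by (rule continuous_on_compose2[OF assms(1)]) (auto intro: continuous_intros)
  have a: "continuous_on P (\<lambda>p. a (fst p))"
    by (rule continuous_on_compose2[OF assms(2)]) (auto intro: continuous_intros)
  have barrier: "continuous_on P (\<lambda>p. ln (mu * w $ i - a (fst p) $ i))" for i
  proof (rule continuous_on_ln)
    show "continuous_on P (\<lambda>p. mu * w $ i - a (fst p) $ i)"
      by (intro continuous_intros a)
    show "\<forall>p\<in>P. mu * w $ i - a (fst p) $ i \<noteq> 0"
      using assms(4) by (metis less_irrefl right_minus_eq)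
  qed
  have centrality: "continuous_on P (\<lambda>p. MAX i\<in>UNIV. \<bar>snd (snd p) $ i * fst (snd p) $ i - mu\<bar>)"
    by (rule continuous_on_Max) (auto intro!: continuous_intros)
  show ?thesis
    unfolding phi_def psi_def
    using assms(3)
    by (intro continuous_on_add continuous_on_diff continuous_on_mult_left continuous_on_sum
        continuous_on_divide continuous_on_power continuous_on_const continuous_on_component
        f a barrier centrality) auto
qed

lemma sum_ln_slack_lower_bound:
  fixes a :: "real^'n \<Rightarrow> real^'m::finite"
  assumes "a x + s = mu *\<^sub>R w" "phi f a w beta1 mu x s y \<le> C" "0 < mu"
    and "c \<le> f x" "norm (a x) \<le> Ma"
  shows "(c - C) / mu - \<bar>beta1\<bar> * real CARD('m) * Ma \<le> (\<Sum>i\<in>UNIV. ln (s $ i))"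
proof -
  have "\<bar>\<Sum>i\<in>UNIV. a x $ i\<bar> \<le> (\<Sum>i\<in>UNIV. \<bar>a x $ i\<bar>)"
    by (rule sum_abs)
  also have "\<dots> \<le> real CARD('m) * Ma"
    using component_le_norm_cart[of "a x"] assms(5) by (intro sum_bounded_above) (meson order_trans)
  finally have "\<bar>beta1\<bar> * \<bar>\<Sum>i\<in>UNIV. a x $ i\<bar> \<le> \<bar>beta1\<bar> * (real CARD('m) * Ma)"
    by (simp add: mult_left_mono)
  then have "beta1 * (\<Sum>i\<in>UNIV. a x $ i) \<le> \<bar>beta1\<bar> * (real CARD('m) * Ma)"
    by (metis abs_ge_self abs_mult order_trans)
  then have "mu * (beta1 * (\<Sum>i\<in>UNIV. a x $ i)) \<le> mu * (\<bar>beta1\<bar> * real CARD('m) * Ma)"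
    using assms(3) by (simp add: mult.assoc)
  moreover have "f x - mu * (beta1 * (\<Sum>i\<in>UNIV. a x $ i) + (\<Sum>i\<in>UNIV. ln (s $ i))) \<le> C"
    using psi_le_phi[of f a w beta1 mu x s y] assms(2) psi_eq_slack[of a x s mu w f beta1] assms(1)
    by linarith
  ultimately have "c - C - mu * (\<bar>beta1\<bar> * real CARD('m) * Ma) \<le> mu * (\<Sum>i\<in>UNIV. ln (s $ i))"
    using assms(4) unfolding distrib_left by linarith
  then show ?thesis
    using assms(3) by (simp add: field_simps)
qed

lemma bounds_of_product_bounds:
  fixes s y :: real
  assumes "0 < mu" "0 < beta2" "0 < \<delta>" "\<delta> \<le> s" "s \<le> M" "0 < y"
    and "beta2 \<le> s * y / mu" "s * y / mu \<le> 1 / beta2"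
  shows "beta2 * mu / M \<le> y" "y \<le> mu / (beta2 * \<delta>)"
proof -
  have "beta2 * mu \<le> s * y"
    using assms(1,7) by (simp add: le_divide_eq)
  also have "\<dots> \<le> M * y"
    using assms(5,6) by (simp add: mult_right_mono)
  finally show "beta2 * mu / M \<le> y"
    using assms(1-5) by (simp add: divide_le_eq mult.commute)
  have "\<delta> * y \<le> s * y"
    using assms(4,6) by (simp add: mult_right_mono)
  also have "\<dots> \<le> mu / beta2"
    using assms(1,8) by (simp add: divide_le_eq)
  finally show "y \<le> mu / (beta2 * \<delta>)"
    using assms(2,3) by (simp add: le_divide_eq field_simps)
qed

lemma Qset_subset_box:
  fixes f :: "real^'n \<Rightarrow> real" and a :: "real^'n \<Rightarrow> real^'m"
  assumes "continuous_on (cball 0 C) f" "continuous_on (cball 0 C) a" "0 < mu" "0 < beta2"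
  obtains \<delta> M ylo yhi where "0 < \<delta>"
    and "Qset f a w beta1 beta2 mu C
           \<subseteq> cball 0 C \<times> cbox (vec ylo) (vec yhi) \<times> cbox (vec \<delta>) (vec M)"
proof -
  obtain Mf where Mf: "\<And>x. x \<in> cball 0 C \<Longrightarrow> norm (f x) \<le> Mf"
    using continuous_on_compact_bound[OF compact_cball assms(1)] by blast
  obtain Ma where "0 \<le> Ma" and Ma: "\<And>x. x \<in> cball 0 C \<Longrightarrow> norm (a x) \<le> Ma"
    using continuous_on_compact_bound[OF compact_cball assms(2)] by blast
  define M where "M = mu * norm w + Ma + 1"
  define \<delta> where "\<delta> = exp ((- Mf - C) / mu - \<bar>beta1\<bar> * real CARD('m) * Ma - real CARD('m) * ln M)"
  have "1 \<le> M"
    using \<open>0 \<le> Ma\<close> assms(3) by (simp add: M_def)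
  have "0 < \<delta>"
    by (simp add: \<delta>_def)
  have "Qset f a w beta1 beta2 mu C
          \<subseteq> cball 0 C \<times> cbox (vec (beta2 * mu / M)) (vec (mu / (beta2 * \<delta>))) \<times> cbox (vec \<delta>) (vec M)"
  proof
    fix p
    assume "p \<in> Qset f a w beta1 beta2 mu C"
    moreover obtain x y s where p: "p = (x, y, s)"
      by (cases p)
    ultimately have x: "x \<in> cball 0 C" and y: "\<And>i. 0 < y $ i" and s: "\<And>i. 0 < s $ i"
      and ratio: "\<And>i. beta2 \<le> s $ i * y $ i / mu \<and> s $ i * y $ i / mu \<le> 1 / beta2"
      and slack: "a x + s = mu *\<^sub>R w" and phi: "phi f a w beta1 mu x s y \<le> C"
      unfolding Qset_def by auto
    have s_le: "s $ i \<le> M" for i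
    proof -
      have "s $ i = mu * w $ i - a x $ i"
        using arg_cong[OF slack, of "\<lambda>v. v $ i"] by simp
      moreover have "mu * w $ i \<le> mu * norm w"
        using assms(3) component_le_norm_cart[of w i] by (simp add: abs_le_iff)
      moreover have "\<bar>a x $ i\<bar> \<le> Ma"
        using component_le_norm_cart[of "a x" i] Ma[OF x] by linarith
      ultimately show ?thesis
        unfolding M_def by linarith
    qed
    have "- Mf \<le> f x"
      using Mf[OF x] by simp
    from sum_ln_slack_lower_bound[OF slack phi assms(3) this Ma[OF x]]
    have s_ge: "\<delta> \<le> s $ i" for i
      using lower_bound_from_sum_ln[of UNIV i "\<lambda>i. s $ i" M] s s_le \<open>1 \<le> M\<close>
      unfolding \<delta>_def by simp
    have "beta2 * mu / M \<le> y $ i \<and> y $ i \<le> mu / (beta2 * \<delta>)" for i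
      using bounds_of_product_bounds[OF assms(3,4) \<open>0 < \<delta>\<close> s_ge[of i] s_le[of i] y[of i]] ratio[of i]
      by simp
    then show "p \<in> cball 0 C \<times> cbox (vec (beta2 * mu / M)) (vec (mu / (beta2 * \<delta>)))
                          \<times> cbox (vec \<delta>) (vec M)"
      using p x s_ge s_le by (simp add: mem_box_cart)
  qed
  then show thesis
    by (rule that[OF \<open>0 < \<delta>\<close>])
qed

lemma Qset_eq_sublevel_set:
  fixes B :: "((real^'n) \<times> (real^'m::finite) \<times> (real^'m)) set"
  assumes "0 < mu" "0 < beta2" "Qset f a w beta1 beta2 mu C \<subseteq> B"
    and "\<And>p i. p \<in> B \<Longrightarrow> norm (fst p) \<le> C \<and> 0 < snd (snd p) $ i"
  shows "Qset f a w beta1 beta2 mu C =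
           (B \<inter> {p. a (fst p) + snd (snd p) = mu *\<^sub>R w}
              \<inter> (\<lambda>p. phi f a w beta1 mu (fst p) (snd (snd p)) (fst (snd p))) -` {..C})
           \<inter> {p. \<forall>i. beta2 \<le> snd (snd p) $ i * fst (snd p) $ i / mu
                     \<and> snd (snd p) $ i * fst (snd p) $ i / mu \<le> 1 / beta2}"
proof (intro set_eqI iffI)
  fix p
  assume "p \<in> Qset f a w beta1 beta2 mu C"
  moreover from this have "p \<in> B"
    using assms(3) by blast
  moreover obtain x y s where "p = (x, y, s)"
    by (cases p)
  ultimately show "p \<in> (B \<inter> {p. a (fst p) + snd (snd p) = mu *\<^sub>R w}
              \<inter> (\<lambda>p. phi f a w beta1 mu (fst p) (snd (snd p)) (fst (snd p))) -` {..C})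
           \<inter> {p. \<forall>i. beta2 \<le> snd (snd p) $ i * fst (snd p) $ i / mu
                     \<and> snd (snd p) $ i * fst (snd p) $ i / mu \<le> 1 / beta2}"
    unfolding Qset_def by simp
next
  fix p
  assume p: "p \<in> (B \<inter> {p. a (fst p) + snd (snd p) = mu *\<^sub>R w}
              \<inter> (\<lambda>p. phi f a w beta1 mu (fst p) (snd (snd p)) (fst (snd p))) -` {..C})
           \<inter> {p. \<forall>i. beta2 \<le> snd (snd p) $ i * fst (snd p) $ i / mu
                     \<and> snd (snd p) $ i * fst (snd p) $ i / mu \<le> 1 / beta2}"
  obtain x y s where xys: "p = (x, y, s)"
    by (cases p)
  have s: "0 < s $ i" for i
    using p assms(4) unfolding xys by fastforce
  have sy: "0 < s $ i * y $ i / mu" for i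
    using p assms(2) unfolding xys by (auto intro: less_le_trans)
  have "0 < y $ i" for i
    using sy[of i] s[of i] assms(1) by (simp add: zero_less_divide_iff zero_less_mult_iff)
  with p s assms(4) show "p \<in> Qset f a w beta1 beta2 mu C"
    unfolding xys Qset_def by fastforce
qed

lemma compact_Qset:
  fixes f :: "real^'n \<Rightarrow> real" and a :: "real^'n \<Rightarrow> real^'m"
  assumes "continuous_on UNIV f" "continuous_on UNIV a" "0 < mu" "0 < beta2" "0 < \<delta>"
    and Q_box: "Qset f a w beta1 beta2 mu C
                  \<subseteq> cball 0 C \<times> cbox (vec ylo) (vec yhi) \<times> cbox (vec \<delta>) (vec M)"
  shows "compact (Qset f a w beta1 beta2 mu C)"
proof -
  define B where "B = cball (0 :: real^'n) C \<times> cbox (vec ylo :: real^'m) (vec yhi)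
                        \<times> cbox (vec \<delta> :: real^'m) (vec M)"
  define K where "K = B \<inter> {p. a (fst p) + snd (snd p) = mu *\<^sub>R w}"
  define g where "g = (\<lambda>p. phi f a w beta1 mu (fst p) (snd (snd p)) (fst (snd p)))"
  define R where "R = {p :: (real^'n) \<times> (real^'m) \<times> (real^'m).
                         \<forall>i. beta2 \<le> snd (snd p) $ i * fst (snd p) $ i / mu
                             \<and> snd (snd p) $ i * fst (snd p) $ i / mu \<le> 1 / beta2}"
  have B: "norm (fst p) \<le> C \<and> \<delta> \<le> snd (snd p) $ i" if "p \<in> B" for p i
    using that unfolding B_def by (auto simp: mem_box_cart mem_Times_iff)
  have strictly_feasible: "a (fst p) $ i < mu * w $ i" if "p \<in> K" for p i
  proof -
    have "a (fst p) + snd (snd p) = mu *\<^sub>R w"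
      using that unfolding K_def by blast
    from arg_cong[OF this, of "\<lambda>v. v $ i"]
    have "snd (snd p) $ i = mu * w $ i - a (fst p) $ i"
      by simp
    then show ?thesis
      using B[of p i] that \<open>0 < \<delta>\<close> unfolding K_def by simp
  qed
  have Q_eq: "Qset f a w beta1 beta2 mu C = (K \<inter> g -` {..C}) \<inter> R"
    unfolding K_def g_def R_def
    using B \<open>0 < \<delta>\<close> Q_box assms(3,4)
    by (intro Qset_eq_sublevel_set) (auto simp: B_def intro: less_le_trans)
  have "compact K"
    unfolding K_def B_def
    by (intro compact_Int_closed compact_Times compact_cball compact_cbox closed_Collect_eq
        continuous_intros continuous_on_compose2[OF assms(2)]) auto
  moreover have "continuous_on K g"
    unfolding g_def using assms(3) strictly_feasible by (intro continuous_on_phi assms(1,2)) auto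
  moreover have "closed R"
    unfolding R_def using assms(3)
    by (intro closed_Collect_all closed_Collect_conj closed_Collect_le continuous_intros) auto
  ultimately have "closed (Qset f a w beta1 beta2 mu C)"
    unfolding Q_eq by (simp add: closed_Int continuous_closed_preimage compact_imp_closed)
  with \<open>compact K\<close> show ?thesis
    unfolding Q_eq by (metis Int_assoc compact_Int_closed inf.absorb_iff2 inf_le1)
qed

theorem lemma4:
  fixes f :: "real^'n \<Rightarrow> real" and a :: "real^'n \<Rightarrow> real^'m"
    and beta1 beta2 mu C :: real and w :: "real^'m"
  assumes "twice_differentiable f" and "twice_differentiable a"
    and "0 < beta1" "beta1 < 1" and "0 < beta2" "beta2 < 1"
    and "\<forall>i. w $ i \<ge> 0"
    and "C > 0" and "mu > 0"
  shows "compact (Qset f a w beta1 beta2 mu C)"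
proof -
  note f = twice_differentiable_imp_continuous_on[OF assms(1)]
    and a = twice_differentiable_imp_continuous_on[OF assms(2)]
  obtain \<delta> M ylo yhi where "0 < \<delta>"
    and "Qset f a w beta1 beta2 mu C \<subseteq> cball 0 C \<times> cbox (vec ylo) (vec yhi) \<times> cbox (vec \<delta>) (vec M)"
    by (rule Qset_subset_box[OF f a assms(9,5)])
  then show ?thesis
    by (intro compact_Qset[OF f a assms(9,5)])
qed

end
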